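(* When the profiled empirical log-likelihood $\ell_n(\lambda;\pi,\alpha,u_1,\dots,u_p)$ attains its maximal value (over $(\alpha,u_1,\dots,u_p)$, with $\lambda$ determined by the Lagrange constraint), the Lagrange multiplier is $\widetilde{\lambda}=(n_0+n_1\pi)/n$, where $n_1=n-n_0$.
   Context: Positive–unlabeled data: a labeled positive sample $\mathbf{x}_1,\dots,\mathbf{x}_{n_0}\sim g(\mathbf{x})$ and an unlabeled sample $\mathbf{x}_{n_0+1},\dots,\mathbf{x}_n\sim \pi g(\mathbf{x})+(1-\pi)h(\mathbf{x})$ with $\pi\in(0,1)$. Under the generalized additive exponential tilting model, the density ratio is $\omega(\mathbf{x})=g(\mathbf{x})/h(\mathbf{x})=\exp\{\alpha+\sum_{j=1}^p u_j(x_j)\}$. Setting $p_i=h(\mathbf{x}_i)$ as parameters, the empirical log-likelihood is $\sum_{i=1}^n\log p_i+\sum_{i=1}^{n_0}\log\omega(\mathbf{x}_i)+\sum_{i=n_0+1}^n\log\{\pi\omega(\mathbf{x}_i)+1-\pi\}$, maximized subject to $p_i>0$, $\sum_i p_i=1$, $\sum_i p_i\omega(\mathbf{x}_i)=1$. The Lagrange method gives $p_i=n^{-1}[1+\lambda\{\omega(\mathbf{x}_i)-1\}]^{-1}$, and after profiling out the $p_i$ (dropping a constant) the log-likelihood becomes $\ell_n(\lambda;\pi,\alpha,u_1,\dots,u_p)=-\sum_{i=1}^n\log[1+\lambda\{\omega(\mathbf{x}_i)-1\}]+\sum_{i=1}^{n_0}\log\omega(\mathbf{x}_i)+\sum_{i=n_0+1}^n\log\{\pi\omega(\mathbf{x}_i)+(1-\pi)\}$,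 where the Lagrange multiplier $\lambda$ satisfies $\sum_{i=1}^n\frac{\omega(\mathbf{x}_i)-1}{1+\lambda\{\omega(\mathbf{x}_i)-1\}}=0$ (so $\lambda$ is an implicit function of $\alpha$ and the $u_j$). *)

theory Defs
  imports "HOL-Analysis.Analysis"
begin

text \<open>Sample: points x 0, ..., x (n-1), each a vector with coordinates indexed by the
finite type 'p (so p = CARD('p)).  Indices i < n0 form the labeled positive sample,
indices n0 <= i < n the unlabeled sample.\<close>

definition tilt :: "real \<Rightarrow> ('p::finite \<Rightarrow> real \<Rightarrow> real) \<Rightarrow> ('p \<Rightarrow> real) \<Rightarrow> real" where
  "tilt \<alpha> u y = exp (\<alpha> + (\<Sum>j\<in>UNIV. u j (y j)))"

text \<open>lambda is an admissible Lagrange multiplier for the weights w (w i = omega(x_i)):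
all p_i = 1/(n (1 + lambda (w i - 1))) are positive and the constraint equation holds.\<close>
definition lagrange_ok :: "nat \<Rightarrow> (nat \<Rightarrow> real) \<Rightarrow> real \<Rightarrow> bool" where
  "lagrange_ok n w lam \<longleftrightarrow>
     (\<forall>i<n. 1 + lam * (w i - 1) > 0) \<and>
     (\<Sum>i<n. (w i - 1) / (1 + lam * (w i - 1))) = 0"

definition lagrange_mult :: "nat \<Rightarrow> (nat \<Rightarrow> real) \<Rightarrow> real" where
  "lagrange_mult n w = (THE lam. lagrange_ok n w lam)"

definition ell :: "nat \<Rightarrow> nat \<Rightarrow> real \<Rightarrow> real \<Rightarrow> (nat \<Rightarrow> real) \<Rightarrow> real" where
  "ell n n0 lam \<pi> w =
     - (\<Sum>i<n. ln (1 + lam * (w i - 1)))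
     + (\<Sum>i<n0. ln (w i))
     + (\<Sum>i\<in>{n0..<n}. ln (\<pi> * w i + (1 - \<pi>)))"

end

theory Submission
  imports Defs
begin

(* Maximality in \<pi> makes the derivative of the mixture part of the likelihood vanish, which gives
   sum over the unlabeled sample of \<pi> \<omega>_i / (\<pi> \<omega>_i + 1 - \<pi>) = \<pi> n1.
   Shifting \<alpha> by t multiplies every \<omega>_i by e^t.  Since ln x \<le> x - 1, the profiled term
   -sum log(1 + \<lambda>(\<omega>_i - 1)) dominates sum log(n p_i) for every p with sum p_i = 1 and
   sum p_i \<omega>_i = 1, with equality at p_i = 1/(n (1 + \<lambda>(\<omega>_i - 1))).  Along a smooth curve of
   such weights through this optimum we get a differentiable lower bound for the likelihood in t
   that touches it at t = 0, so its derivative -\<lambda> n + n0 + sum \<pi> \<omega>_i / (\<pi> \<omega>_i + 1 - \<pi>)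
   vanishes there, which together with the first identity gives \<lambda> n = n0 + \<pi> n1.  The implicit
   function \<lambda>(\<alpha>) is never differentiated. *)

definition constraint_sum :: "nat \<Rightarrow> (nat \<Rightarrow> real) \<Rightarrow> real \<Rightarrow> real" where
  "constraint_sum n w lam = (\<Sum>i<n. (w i - 1) / (1 + lam * (w i - 1)))"

lemma lagrange_ok_iff:
  "lagrange_ok n w lam \<longleftrightarrow> (\<forall>i<n. 0 < 1 + lam * (w i - 1)) \<and> constraint_sum n w lam = 0"
  by (simp add: lagrange_ok_def constraint_sum_def)

lemma constraint_sum_strict_antimono:
  assumes a: "\<forall>i<n. 0 < 1 + a * (w i - 1)" and b: "\<forall>i<n. 0 < 1 + b * (w i - 1)"
    and nondeg: "\<exists>i<n. w i \<noteq> 1" and "a < b"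
  shows "constraint_sum n w b < constraint_sum n w a"
proof -
  have "c / (1 + a * c) - c / (1 + b * c) = (b - a) * c^2 / ((1 + a * c) * (1 + b * c))"
    if "0 < 1 + a * c" "0 < 1 + b * c" for c :: real
    using that by (simp add: field_simps power2_eq_square)
  then have diff: "(w i - 1) / (1 + a * (w i - 1)) - (w i - 1) / (1 + b * (w i - 1))
      = (b - a) * (w i - 1)^2 / ((1 + a * (w i - 1)) * (1 + b * (w i - 1)))" if "i < n" for i
    using a b that by blast
  have "0 \<le> (b - a) * (w i - 1)^2 / ((1 + a * (w i - 1)) * (1 + b * (w i - 1)))" if "i < n" for i
    using a b that \<open>a < b\<close> by (intro divide_nonneg_pos mult_nonneg_nonneg mult_pos_pos) auto
  moreover have "0 < (b - a) * (w i - 1)^2 / ((1 + a * (w i - 1)) * (1 + b * (w i - 1)))"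
    if "i < n" "w i \<noteq> 1" for i
    using a b that \<open>a < b\<close> by (intro divide_pos_pos mult_pos_pos) auto
  ultimately show ?thesis
    unfolding constraint_sum_def using nondeg diff
    by (intro sum_strict_mono_ex1) force+
qed

lemma lagrange_ok_unique:
  assumes "lagrange_ok n w l1" "lagrange_ok n w l2" "\<exists>i<n. w i \<noteq> 1"
  shows "l1 = l2"
  using constraint_sum_strict_antimono[of n l1 w l2] constraint_sum_strict_antimono[of n l2 w l1] assms
  by (force simp: lagrange_ok_iff)

lemma lagrange_mult_eqI:
  assumes "lagrange_ok n w lam" "\<exists>i<n. w i \<noteq> 1"
  shows "lagrange_mult n w = lam"
  unfolding lagrange_mult_def using assms lagrange_ok_unique by blast

lemma one_plus_mult_pos_between:
  fixes a b l c :: real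
  assumes "a \<le> l" "l \<le> b" "0 < 1 + a * c" "0 < 1 + b * c"
  shows "0 < 1 + l * c"
proof -
  have "min (a * c) (b * c) \<le> l * c"
    using assms(1,2) by (cases "0 \<le> c") (auto simp: mult_right_mono mult_right_mono_neg min_le_iff_disj)
  then show ?thesis
    using assms(3,4) by linarith
qed

lemma eventually_all_pos:
  fixes f :: "nat \<Rightarrow> 'a \<Rightarrow> real"
  assumes "\<And>i. i < n \<Longrightarrow> (f i \<longlongrightarrow> c i) F" "\<And>i. i < n \<Longrightarrow> 0 < c i"
  shows "eventually (\<lambda>t. \<forall>i<n. 0 < f i t) F"
proof -
  have "\<forall>i\<in>{..<n}. eventually (\<lambda>t. 0 < f i t) F"
    using assms order_tendstoD(1) by blast
  from eventually_ball_finite[OF finite_lessThan this] show ?thesis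
    by eventually_elim auto
qed

lemma lagrange_ok_exists_between:
  assumes "a \<le> b" and adm_a: "\<forall>i<n. 0 < 1 + a * (v i - 1)" and adm_b: "\<forall>i<n. 0 < 1 + b * (v i - 1)"
    and "constraint_sum n v b \<le> 0" "0 \<le> constraint_sum n v a"
  obtains l where "l \<in> {a..b}" "lagrange_ok n v l"
proof -
  have pos: "0 < 1 + l * (v i - 1)" if "l \<in> {a..b}" "i < n" for l i
    using adm_a adm_b that by (auto intro: one_plus_mult_pos_between)
  have "continuous_on {a..b} (constraint_sum n v)"
    unfolding constraint_sum_def using pos by (intro continuous_intros) (auto simp: less_le)
  then obtain l where "l \<in> {a..b}" "constraint_sum n v l = 0"
    using IVT2'[of "constraint_sum n v" b 0 a] assms(1,4,5) by force
  with pos show thesis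
    by (auto simp: lagrange_ok_iff intro: that)
qed

lemma lagrange_ok_bracket:
  assumes ok: "lagrange_ok n w l0" and nondeg: "\<exists>i<n. w i \<noteq> 1"
  obtains d where "0 < d"
    "\<forall>i<n. 0 < 1 + (l0 - d) * (w i - 1)" "\<forall>i<n. 0 < 1 + (l0 + d) * (w i - 1)"
    "0 < constraint_sum n w (l0 - d)" "constraint_sum n w (l0 + d) < 0"
proof -
  have adm0: "\<forall>i<n. 0 < 1 + l0 * (w i - 1)" and zero: "constraint_sum n w l0 = 0"
    using ok by (auto simp: lagrange_ok_iff)
  have "eventually (\<lambda>d. \<forall>i<n. 0 < 1 + (l0 - d) * (w i - 1)) (at_right 0)"
    by (rule eventually_all_pos[where c = "\<lambda>i. 1 + (l0 - 0) * (w i - 1)"];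
        (intro tendsto_intros)?) (use adm0 in auto)
  moreover have "eventually (\<lambda>d. \<forall>i<n. 0 < 1 + (l0 + d) * (w i - 1)) (at_right 0)"
    by (rule eventually_all_pos[where c = "\<lambda>i. 1 + (l0 + 0) * (w i - 1)"];
        (intro tendsto_intros)?) (use adm0 in auto)
  moreover note eventually_at_right_less
  ultimately have "eventually (\<lambda>d. 0 < d \<and> (\<forall>i<n. 0 < 1 + (l0 - d) * (w i - 1))
      \<and> (\<forall>i<n. 0 < 1 + (l0 + d) * (w i - 1))) (at_right (0::real))"
    by eventually_elim auto
  then obtain d where "0 < d" and adm_lo: "\<forall>i<n. 0 < 1 + (l0 - d) * (w i - 1)"
    and adm_hi: "\<forall>i<n. 0 < 1 + (l0 + d) * (w i - 1)"
    using eventually_happens'[OF trivial_limit_at_right_real] by blast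
  moreover have "constraint_sum n w l0 < constraint_sum n w (l0 - d)"
    by (rule constraint_sum_strict_antimono) (use adm_lo adm0 nondeg \<open>0 < d\<close> in auto)
  moreover have "constraint_sum n w (l0 + d) < constraint_sum n w l0"
    by (rule constraint_sum_strict_antimono) (use adm_hi adm0 nondeg \<open>0 < d\<close> in auto)
  ultimately show thesis
    using that zero by simp
qed

(* The sign change of constraint_sum across the bracket l0 \<plusminus> d persists under small
   perturbations of the weights. *)
lemma eventually_lagrange_ok_lagrange_mult:
  fixes v :: "'a \<Rightarrow> nat \<Rightarrow> real"
  assumes ok: "lagrange_ok n w l0" and nondeg: "\<exists>i<n. w i \<noteq> 1"
    and lim: "\<And>i. i < n \<Longrightarrow> ((\<lambda>t. v t i) \<longlongrightarrow> w i) F"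
  shows "eventually (\<lambda>t. lagrange_ok n (v t) (lagrange_mult n (v t))) F"
proof -
  obtain d where "0 < d" and adm_lo: "\<forall>i<n. 0 < 1 + (l0 - d) * (w i - 1)"
    and adm_hi: "\<forall>i<n. 0 < 1 + (l0 + d) * (w i - 1)"
    and lo: "0 < constraint_sum n w (l0 - d)" and hi: "constraint_sum n w (l0 + d) < 0"
    using lagrange_ok_bracket[OF ok nondeg] by blast
  have adm_t: "eventually (\<lambda>t. \<forall>i<n. 0 < 1 + c * (v t i - 1)) F"
    if "\<forall>i<n. 0 < 1 + c * (w i - 1)" for c
    by (rule eventually_all_pos[where c = "\<lambda>i. 1 + c * (w i - 1)"];
        (intro tendsto_intros lim)?) (use that in auto)
  have lim_sum: "((\<lambda>t. constraint_sum n (v t) c) \<longlongrightarrow> constraint_sum n w c) F"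
    if "\<forall>i<n. 0 < 1 + c * (w i - 1)" for c
    unfolding constraint_sum_def using that by (intro tendsto_intros lim) auto
  obtain k where k: "k < n" "w k \<noteq> 1"
    using nondeg by blast
  have "eventually (\<lambda>t. v t k \<noteq> 1) F"
    using k by (intro tendsto_imp_eventually_ne[OF lim])
  with adm_t[OF adm_lo] adm_t[OF adm_hi]
    order_tendstoD(1)[OF lim_sum[OF adm_lo] lo] order_tendstoD(2)[OF lim_sum[OF adm_hi] hi]
  show ?thesis
  proof eventually_elim
    case (elim t)
    obtain l where "lagrange_ok n (v t) l"
      by (rule lagrange_ok_exists_between[where a = "l0 - d" and b = "l0 + d" and v = "v t"])
        (use elim \<open>0 < d\<close> in auto)
    with elim(5) k(1) show ?case
      using lagrange_mult_eqI by metis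
  qed
qed

definition lagrange_weight :: "nat \<Rightarrow> (nat \<Rightarrow> real) \<Rightarrow> real \<Rightarrow> nat \<Rightarrow> real" where
  "lagrange_weight n w lam i = 1 / (real n * (1 + lam * (w i - 1)))"

lemma lagrange_weight_pos:
  assumes "lagrange_ok n w lam" "i < n"
  shows "0 < lagrange_weight n w lam i"
  using assms by (simp add: lagrange_ok_def lagrange_weight_def)

lemma sum_lagrange_weight_mult_diff:
  assumes "lagrange_ok n w lam"
  shows "(\<Sum>i<n. lagrange_weight n w lam i * (w i - 1)) = 0"
proof -
  have "(\<Sum>i<n. lagrange_weight n w lam i * (w i - 1)) = constraint_sum n w lam / real n"
    unfolding constraint_sum_def sum_divide_distrib lagrange_weight_def by (simp add: field_simps)
  with assms show ?thesis
    by (simp add: lagrange_ok_iff)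
qed

lemma sum_lagrange_weight:
  assumes ok: "lagrange_ok n w lam" and "0 < n"
  shows "(\<Sum>i<n. lagrange_weight n w lam i) = 1"
proof -
  \<comment> \<open>d stands for the denominator 1 + lam * c; kept opaque, field_simps can cancel it\<close>
  have "1 / (real n * d) = 1 / real n - lam * (1 / (real n * d) * c)"
    if "lam * c = d - 1" "0 < d" for c d
    using that \<open>0 < n\<close> by (simp add: field_simps)
  then have "lagrange_weight n w lam i = 1 / real n - lam * (lagrange_weight n w lam i * (w i - 1))"
    if "i < n" for i
    unfolding lagrange_weight_def by this (use ok that in \<open>auto simp: lagrange_ok_def\<close>)
  then have "(\<Sum>i<n. lagrange_weight n w lam i)
      = (\<Sum>i<n. 1 / real n - lam * (lagrange_weight n w lam i * (w i - 1)))"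
    by (intro sum.cong) auto
  also have "\<dots> = (\<Sum>i<n. 1 / real n) - lam * (\<Sum>i<n. lagrange_weight n w lam i * (w i - 1))"
    by (simp add: sum_subtractf sum_distrib_left)
  also have "\<dots> = 1"
    using sum_lagrange_weight_mult_diff[OF ok] \<open>0 < n\<close> by simp
  finally show ?thesis .
qed

lemma sum_diff_eq_lagrange_variance:
  assumes ok: "lagrange_ok n w lam"
  shows "(\<Sum>i<n. w i - 1) = lam * real n * (\<Sum>i<n. lagrange_weight n w lam i * (w i - 1)^2)"
proof -
  have "c = real n * (1 / (real n * d) * c) + lam * real n * (1 / (real n * d) * c^2)"
    if "lam * c = d - 1" "0 < d" "0 < n" for c d
    using that by (simp add: field_simps power2_eq_square) (metis distrib_left mult.right_neutral)
  then have "w i - 1 = real n * (lagrange_weight n w lam i * (w i - 1))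
      + lam * real n * (lagrange_weight n w lam i * (w i - 1)^2)" if "i < n" for i
    unfolding lagrange_weight_def by this (use ok that in \<open>auto simp: lagrange_ok_def\<close>)
  then have "(\<Sum>i<n. w i - 1) = (\<Sum>i<n. real n * (lagrange_weight n w lam i * (w i - 1))
      + lam * real n * (lagrange_weight n w lam i * (w i - 1)^2))"
    by (intro sum.cong) auto
  also have "\<dots> = real n * (\<Sum>i<n. lagrange_weight n w lam i * (w i - 1))
      + lam * real n * (\<Sum>i<n. lagrange_weight n w lam i * (w i - 1)^2)"
    by (simp add: sum.distrib sum_distrib_left)
  also have "\<dots> = lam * real n * (\<Sum>i<n. lagrange_weight n w lam i * (w i - 1)^2)"
    using sum_lagrange_weight_mult_diff[OF ok] by simp
  finally show ?thesis .
qed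

lemma ln_lagrange_weight:
  assumes "lagrange_ok n w lam" "i < n"
  shows "ln (real n * lagrange_weight n w lam i) = - ln (1 + lam * (w i - 1))"
  using assms by (simp add: lagrange_ok_def lagrange_weight_def ln_div)

lemma empirical_loglik_le_profile:
  fixes v p :: "nat \<Rightarrow> real"
  assumes adm: "\<forall>i<n. 0 < 1 + lam * (v i - 1)" and p_pos: "\<forall>i<n. 0 < p i"
    and sum_p: "(\<Sum>i<n. p i) = 1" and sum_pv: "(\<Sum>i<n. p i * v i) = 1"
  shows "(\<Sum>i<n. ln (real n * p i)) \<le> - (\<Sum>i<n. ln (1 + lam * (v i - 1)))"
proof -
  have "ln (real n * p i) + ln (1 + lam * (v i - 1)) \<le> real n * p i * (1 + lam * (v i - 1)) - 1"
    if "i < n" for i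
  proof -
    have "0 < real n * p i" "0 < 1 + lam * (v i - 1)"
      using adm p_pos that by auto
    then show ?thesis
      using ln_le_minus_one[of "real n * p i * (1 + lam * (v i - 1))"] ln_mult_pos by simp
  qed
  then have "(\<Sum>i<n. ln (real n * p i) + ln (1 + lam * (v i - 1)))
      \<le> (\<Sum>i<n. real n * p i * (1 + lam * (v i - 1)) - 1)"
    by (intro sum_mono) simp
  also have "\<dots> = real n * ((\<Sum>i<n. p i) + lam * ((\<Sum>i<n. p i * v i) - (\<Sum>i<n. p i))) - real n"
    by (simp add: sum_subtractf sum_distrib_left sum.distrib algebra_simps)
  also have "\<dots> = 0"
    using sum_p sum_pv by simp
  finally show ?thesis
    by (simp add: sum.distrib)
qed

lemma lagrange_variance_pos:
  assumes ok: "lagrange_ok n w lam" and nondeg: "\<exists>i<n. w i \<noteq> 1"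
  shows "0 < (\<Sum>i<n. lagrange_weight n w lam i * (w i - 1)^2)"
proof -
  obtain k where k: "k < n" "w k \<noteq> 1"
    using nondeg by blast
  have "0 \<le> lagrange_weight n w lam i * (w i - 1)^2" if "i < n" for i
    using lagrange_weight_pos[OF ok that] by simp
  moreover have "0 < lagrange_weight n w lam k * (w k - 1)^2"
    using lagrange_weight_pos[OF ok k(1)] k(2) by simp
  ultimately show ?thesis
    using k(1) by (intro sum_pos2[of _ k]) auto
qed

lemma scaled_feasible_weights:
  fixes w :: "nat \<Rightarrow> real"
  assumes ok: "lagrange_ok n w lam" and nondeg: "\<exists>i<n. w i \<noteq> 1"
  obtains p :: "real \<Rightarrow> nat \<Rightarrow> real" where
    "\<And>t. (\<Sum>i<n. p t i) = 1" "\<And>t. (\<Sum>i<n. p t i * (exp t * w i)) = 1"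
    "eventually (\<lambda>t. \<forall>i<n. 0 < p t i) (at 0)"
    "\<And>i. p 0 i = lagrange_weight n w lam i"
    "((\<lambda>t. \<Sum>i<n. ln (real n * p t i)) has_field_derivative - lam * real n) (at 0)"
proof -
  have "0 < n"
    using nondeg by auto
  define q where "q = lagrange_weight n w lam"
  define V where "V = (\<Sum>i<n. q i * (w i - 1)^2)"
  \<comment> \<open>b is chosen so that the second moment condition exp t * (1 + b t * V) = 1 holds\<close>
  define b where "b t = (exp (- t) - 1) / V" for t :: real
  define p where "p t i = q i * (1 + b t * (w i - 1))" for t i
  have q_pos: "\<And>i. i < n \<Longrightarrow> 0 < q i"
    using ok by (simp add: q_def lagrange_weight_pos)
  have sum_q: "(\<Sum>i<n. q i) = 1" and sum_q_diff: "(\<Sum>i<n. q i * (w i - 1)) = 0"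
    using sum_lagrange_weight[OF ok] sum_lagrange_weight_mult_diff[OF ok] \<open>0 < n\<close> by (auto simp: q_def)
  have "0 < V"
    using lagrange_variance_pos[OF ok nondeg] by (simp add: V_def q_def)
  have "p t i = q i + b t * (q i * (w i - 1))" for t i
    by (simp add: p_def algebra_simps)
  then have sum_p: "(\<Sum>i<n. p t i) = 1" for t
    using sum_q sum_q_diff by (simp add: sum.distrib sum_distrib_left[symmetric])
  have "p t i * w i = q i + (1 + b t) * (q i * (w i - 1)) + b t * (q i * (w i - 1)^2)" for t i
    by (simp add: p_def algebra_simps power2_eq_square)
  then have sum_p_w: "(\<Sum>i<n. p t i * w i) = 1 + b t * V" for t
    using sum_q sum_q_diff by (simp add: V_def sum.distrib sum_distrib_left[symmetric])
  have sum_pw: "(\<Sum>i<n. p t i * (exp t * w i)) = 1" for t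
  proof -
    have "(\<Sum>i<n. p t i * (exp t * w i)) = exp t * (\<Sum>i<n. p t i * w i)"
      by (simp add: sum_distrib_left algebra_simps)
    also have "\<dots> = exp t * (1 + b t * V)"
      by (simp add: sum_p_w)
    also have "\<dots> = 1"
      using \<open>0 < V\<close> by (simp add: b_def exp_minus field_simps)
    finally show ?thesis .
  qed
  have pos: "eventually (\<lambda>t. \<forall>i<n. 0 < p t i) (at 0)"
    by (rule eventually_all_pos[where c = q]; (simp add: p_def b_def, intro tendsto_eq_intros)?)
      (use \<open>0 < V\<close> in \<open>auto simp: q_pos\<close>)
  have p0: "p 0 i = lagrange_weight n w lam i" for i
    by (simp add: p_def b_def q_def)
  have "((\<lambda>t. ln (real n * p t i)) has_field_derivative - (w i - 1) / V) (at 0)"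
    if "i < n" for i
    using q_pos[OF that] \<open>0 < V\<close> \<open>0 < n\<close> unfolding p_def b_def
    by (auto intro!: derivative_eq_intros simp: field_simps)
  then have "((\<lambda>t. \<Sum>i<n. ln (real n * p t i)) has_field_derivative (\<Sum>i<n. - (w i - 1) / V)) (at 0)"
    by (intro DERIV_sum) simp
  also have "(\<Sum>i<n. - (w i - 1) / V) = - (\<Sum>i<n. w i - 1) / V"
    unfolding sum_negf[symmetric] sum_divide_distrib ..
  also have "\<dots> = - lam * real n"
    using sum_diff_eq_lagrange_variance[OF ok] \<open>0 < V\<close> by (simp add: V_def q_def)
  finally show thesis
    by (rule that[OF sum_p sum_pw pos p0])
qed

lemma has_field_derivative_local_max:
  fixes f :: "real \<Rightarrow> real"
  assumes "(f has_field_derivative D) (at x)" and "eventually (\<lambda>y. f y \<le> f x) (at x)"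
  shows "D = 0"
  using has_derivative_local_max[OF assms(1)[unfolded has_field_derivative_def] assms(2)]
  by (metis mult.right_neutral)

lemma mixture_loglik_stationary:
  fixes w :: "nat \<Rightarrow> real" and A :: "nat set"
  assumes w_pos: "\<And>i. i \<in> A \<Longrightarrow> 0 < w i" and "0 < \<pi>" "\<pi> < 1"
    and max: "\<And>p. 0 < p \<Longrightarrow> p < 1 \<Longrightarrow>
      (\<Sum>i\<in>A. ln (p * w i + (1 - p))) \<le> (\<Sum>i\<in>A. ln (\<pi> * w i + (1 - \<pi>)))"
  shows "(\<Sum>i\<in>A. \<pi> * w i / (\<pi> * w i + (1 - \<pi>))) = \<pi> * card A"
proof -
  have E_pos: "0 < \<pi> * w i + (1 - \<pi>)" if "i \<in> A" for i
    using w_pos[OF that] \<open>0 < \<pi>\<close> \<open>\<pi> < 1\<close> by (simp add: add_pos_nonneg)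
  have deriv: "((\<lambda>p. \<Sum>i\<in>A. ln (p * w i + (1 - p))) has_field_derivative
      (\<Sum>i\<in>A. (w i - 1) / (\<pi> * w i + (1 - \<pi>)))) (at \<pi>)"
    by (intro DERIV_sum) (auto intro!: derivative_eq_intros dest: E_pos simp: field_simps)
  have "eventually (\<lambda>p. 0 < p \<and> p < 1) (at \<pi>)"
    using \<open>0 < \<pi>\<close> \<open>\<pi> < 1\<close>
    by (intro eventually_conj order_tendstoD[OF tendsto_ident_at])
  then have "eventually (\<lambda>p. (\<Sum>i\<in>A. ln (p * w i + (1 - p))) \<le> (\<Sum>i\<in>A. ln (\<pi> * w i + (1 - \<pi>)))) (at \<pi>)"
    by eventually_elim (use max in auto)
  with deriv have stationary: "(\<Sum>i\<in>A. (w i - 1) / (\<pi> * w i + (1 - \<pi>))) = 0"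
    by (rule has_field_derivative_local_max)
  have "\<pi> * w i / (\<pi> * w i + (1 - \<pi>)) = \<pi> + \<pi> * (1 - \<pi>) * ((w i - 1) / (\<pi> * w i + (1 - \<pi>)))"
    if "i \<in> A" for i
    using E_pos[OF that] by (simp add: field_simps)
  then have "(\<Sum>i\<in>A. \<pi> * w i / (\<pi> * w i + (1 - \<pi>)))
      = \<pi> * card A + \<pi> * (1 - \<pi>) * (\<Sum>i\<in>A. (w i - 1) / (\<pi> * w i + (1 - \<pi>)))"
    by (simp add: sum.distrib sum_distrib_left)
  with stationary show ?thesis
    by simp
qed

definition ratio_loglik :: "nat \<Rightarrow> nat \<Rightarrow> real \<Rightarrow> (nat \<Rightarrow> real) \<Rightarrow> real" where
  "ratio_loglik n n0 \<pi> w = (\<Sum>i<n0. ln (w i)) + (\<Sum>i\<in>{n0..<n}. ln (\<pi> * w i + (1 - \<pi>)))"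

lemma ell_eq_ratio_loglik:
  "ell n n0 lam \<pi> w = ratio_loglik n n0 \<pi> w - (\<Sum>i<n. ln (1 + lam * (w i - 1)))"
  by (simp add: ell_def ratio_loglik_def)

lemma ratio_loglik_scale_deriv:
  assumes w_pos: "\<And>i. 0 < w i" and "0 \<le> \<pi>" "\<pi> \<le> 1"
  shows "((\<lambda>t. ratio_loglik n n0 \<pi> (\<lambda>i. exp t * w i)) has_field_derivative
      real n0 + (\<Sum>i\<in>{n0..<n}. \<pi> * w i / (\<pi> * w i + (1 - \<pi>)))) (at 0)"
proof -
  have E_pos: "0 < \<pi> * w i + (1 - \<pi>)" for i
    using w_pos[of i] assms(2,3) by (cases "\<pi> = 0") (auto intro: add_pos_nonneg)
  have "((\<lambda>t. \<Sum>i<n0. ln (exp t * w i)) has_field_derivative (\<Sum>i<n0. 1)) (at 0)"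
    by (intro DERIV_sum) (auto intro!: derivative_eq_intros simp: w_pos less_imp_neq[symmetric])
  moreover have "((\<lambda>t. \<Sum>i\<in>{n0..<n}. ln (\<pi> * (exp t * w i) + (1 - \<pi>))) has_field_derivative
      (\<Sum>i\<in>{n0..<n}. \<pi> * w i / (\<pi> * w i + (1 - \<pi>)))) (at 0)"
    by (intro DERIV_sum) (auto intro!: derivative_eq_intros simp: E_pos)
  ultimately show ?thesis
    unfolding ratio_loglik_def by (auto intro: derivative_eq_intros)
qed

lemma lagrange_eq_of_ell_max_scaling:
  fixes w :: "nat \<Rightarrow> real"
  assumes w_pos: "\<And>i. 0 < w i" and ok: "lagrange_ok n w l0" and nondeg: "\<exists>i<n. w i \<noteq> 1"
    and "0 \<le> \<pi>" "\<pi> \<le> 1"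
    and max: "\<And>t. lagrange_ok n (\<lambda>i. exp t * w i) (lagrange_mult n (\<lambda>i. exp t * w i)) \<Longrightarrow>
      ell n n0 (lagrange_mult n (\<lambda>i. exp t * w i)) \<pi> (\<lambda>i. exp t * w i) \<le> ell n n0 l0 \<pi> w"
  shows "l0 * real n = real n0 + (\<Sum>i\<in>{n0..<n}. \<pi> * w i / (\<pi> * w i + (1 - \<pi>)))"
proof -
  obtain p where sum_p: "\<And>t. (\<Sum>i<n. p t i) = 1"
    and sum_pw: "\<And>t. (\<Sum>i<n. p t i * (exp t * w i)) = 1"
    and pos: "eventually (\<lambda>t. \<forall>i<n. 0 < p t i) (at 0)"
    and p0: "\<And>i. p 0 i = lagrange_weight n w l0 i"
    and deriv_p: "((\<lambda>t. \<Sum>i<n. ln (real n * p t i)) has_field_derivative - l0 * real n) (at 0)"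
    using scaled_feasible_weights[OF ok nondeg] by blast
  define L where "L t = (\<Sum>i<n. ln (real n * p t i)) + ratio_loglik n n0 \<pi> (\<lambda>i. exp t * w i)" for t
  have "L 0 = ell n n0 l0 \<pi> w"
    using ok by (simp add: L_def p0 ln_lagrange_weight sum_negf ell_eq_ratio_loglik)
  have "eventually (\<lambda>t. lagrange_ok n (\<lambda>i. exp t * w i) (lagrange_mult n (\<lambda>i. exp t * w i))) (at 0)"
    by (rule eventually_lagrange_ok_lagrange_mult[OF ok nondeg]) (auto intro!: tendsto_eq_intros)
  then have "eventually (\<lambda>t. L t \<le> L 0) (at 0)"
    using pos
  proof eventually_elim
    case (elim t)
    let ?v = "\<lambda>i. exp t * w i"
    have "L t \<le> ratio_loglik n n0 \<pi> ?v - (\<Sum>i<n. ln (1 + lagrange_mult n ?v * (?v i - 1)))"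
      using empirical_loglik_le_profile[OF _ elim(2) sum_p sum_pw] elim(1)
      by (simp add: L_def lagrange_ok_def)
    also have "\<dots> \<le> L 0"
      using max[OF elim(1)] \<open>L 0 = ell n n0 l0 \<pi> w\<close> by (simp add: ell_eq_ratio_loglik)
    finally show ?case .
  qed
  moreover have "(L has_field_derivative
      - l0 * real n + (real n0 + (\<Sum>i\<in>{n0..<n}. \<pi> * w i / (\<pi> * w i + (1 - \<pi>))))) (at 0)"
    unfolding L_def by (intro DERIV_add deriv_p ratio_loglik_scale_deriv w_pos assms(4,5))
  ultimately show ?thesis
    using has_field_derivative_local_max by fastforce
qed

lemma tilt_add: "tilt (\<alpha> + t) u y = exp t * tilt \<alpha> u y"
  by (simp add: tilt_def exp_add[symmetric] algebra_simps)

theorem proposition1: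
  fixes n n0 :: nat
    and x :: "nat \<Rightarrow> ('p::finite \<Rightarrow> real)"
    and U :: "('p \<Rightarrow> real \<Rightarrow> real) set"
    and \<pi>h \<alpha>h :: real
    and uh :: "'p \<Rightarrow> real \<Rightarrow> real"
  assumes n0_pos: "0 < n0" and n0_lt: "n0 < n"
    and pi_h: "0 < \<pi>h" "\<pi>h < 1"
    and u_h: "uh \<in> U"
    and feas_h: "\<exists>lam. lagrange_ok n (\<lambda>i. tilt \<alpha>h uh (x i)) lam"
    and nondeg_h: "\<exists>i<n. tilt \<alpha>h uh (x i) \<noteq> 1"
    and max_h: "\<And>\<pi> \<alpha> u. 0 < \<pi> \<Longrightarrow> \<pi> < 1 \<Longrightarrow> u \<in> U \<Longrightarrow>
        (\<exists>lam. lagrange_ok n (\<lambda>i. tilt \<alpha> u (x i)) lam) \<Longrightarrow>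
        ell n n0 (lagrange_mult n (\<lambda>i. tilt \<alpha> u (x i))) \<pi> (\<lambda>i. tilt \<alpha> u (x i))
          \<le> ell n n0 (lagrange_mult n (\<lambda>i. tilt \<alpha>h uh (x i))) \<pi>h (\<lambda>i. tilt \<alpha>h uh (x i))"
  shows "lagrange_mult n (\<lambda>i. tilt \<alpha>h uh (x i)) = (real n0 + real (n - n0) * \<pi>h) / real n"
proof -
  define w where "w = (\<lambda>i. tilt \<alpha>h uh (x i))"
  obtain l0 where ok: "lagrange_ok n w l0"
    using feas_h by (auto simp: w_def)
  have nondeg: "\<exists>i<n. w i \<noteq> 1"
    using nondeg_h by (simp add: w_def)
  have mult: "lagrange_mult n w = l0"
    by (rule lagrange_mult_eqI[OF ok nondeg])
  have w_pos: "0 < w i" for i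
    by (simp add: w_def tilt_def)
  have "(\<Sum>i\<in>{n0..<n}. \<pi>h * w i / (\<pi>h * w i + (1 - \<pi>h))) = \<pi>h * real (n - n0)"
  proof (rule mixture_loglik_stationary[where A = "{n0..<n}", simplified])
    fix p :: real assume "0 < p" "p < 1"
    from max_h[OF this u_h, of \<alpha>h] feas_h
    show "(\<Sum>i\<in>{n0..<n}. ln (p * w i + (1 - p))) \<le> (\<Sum>i\<in>{n0..<n}. ln (\<pi>h * w i + (1 - \<pi>h)))"
      by (simp add: w_def[symmetric] mult ell_def)
  qed (use w_pos pi_h in auto)
  moreover have "l0 * real n = real n0 + (\<Sum>i\<in>{n0..<n}. \<pi>h * w i / (\<pi>h * w i + (1 - \<pi>h)))"
  proof (rule lagrange_eq_of_ell_max_scaling[OF w_pos ok nondeg])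
    fix t assume "lagrange_ok n (\<lambda>i. exp t * w i) (lagrange_mult n (\<lambda>i. exp t * w i))"
    then show "ell n n0 (lagrange_mult n (\<lambda>i. exp t * w i)) \<pi>h (\<lambda>i. exp t * w i) \<le> ell n n0 l0 \<pi>h w"
      using max_h[OF pi_h u_h, of "\<alpha>h + t"] mult by (auto simp: tilt_add w_def)
  qed (use pi_h in auto)
  ultimately show ?thesis
    using mult n0_lt by (simp add: w_def[symmetric] field_simps)
qed

end
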